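(* Let $\Omega$ be a weighted clone, $\omega_1,\dots,\omega_n\in\Omega$, and $c_1,\dots,c_n\ge0$ real numbers. Let $\ell_i$ denote the arity of $\omega_i$. For each $1\le i\le n$ and $1\le j\le\ell_i$ let $g_{i,j}\in\mathrm{supp}(\Omega)$ be a $k$-ary operation (for a fixed $k$). If the function $\mu=\sum_{i=1}^n c_i\cdot\omega_i[g_{i,1},\dots,g_{i,\ell_i}]$ is a proper weighting, then $\mu\in\Omega$.
   Context: $D$ is a fixed finite set with $|D|\ge2$. A $k$-ary operation is $f:D^k\to D$; $\mathbf{O}^{(k)}_D$ is the set of $k$-ary operations. Projections: $e^{(k)}_i(x_1,\dots,x_k)=x_i$; $\mathbf{J}_D$ is the set of all projections, $\mathbf{J}_D^{(k)}$ the $k$-ary ones. Superposition of operations: $f[g_1,\dots,g_k](\mathbf{x})=f(g_1(\mathbf{x}),\dots,g_k(\mathbf{x}))$. A $k$-ary (proper) weighting is a function $\omega:\mathbf{O}^{(k)}_D\to\mathbb{R}$ with $\sum_f\omega(f)=0$ and $\omega(f)<0$ only if $f$ is a projection (a function with zero sum that is negative on some non-projection is an improper weighting). $\mathrm{supp}(\omega)=\mathbf{J}_D^{(k)}\cup\{f:\omega(f)>0\}$, and for a non-empty set $\Omega$ of weightings, $\mathrm{supp}(\Omega)=\mathbf{J}_D\cup\bigcup_{\omega\in\Omega}\mathrm{supp}(\omega)$. For $\omega:\mathbf{O}^{(\ell)}_D\to\mathbb{R}$ and $k$-ary $g_1,\dots,g_\ell$, the superposition $\omega[g_1,\dots,g_\ell]:\mathbf{O}^{(k)}_D\to\mathbb{R}$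 is $\omega[g_1,\dots,g_\ell](f')=\sum_{f:f[g_1,\dots,g_\ell]=f'}\omega(f)$; it is proper if it is a proper weighting. Topology: the $k$-ary weightings lie in $\mathbb{R}^{\mathbf{O}^{(k)}_D}$ (Euclidean topology), with the disjoint union topology over $k$. A weighted clone is a non-empty set $\Omega$ of weightings closed under scaling by non-negative reals, addition of weightings of equal arity, and proper superposition with operations from $\mathrm{supp}(\Omega)$, and topologically closed. *)

theory Defs
  imports "HOL-Analysis.Analysis"
begin

text \<open>A k-ary operation on the finite domain 'd is represented as a function on
lists which is only meaningful on lists of length k (value undefined elsewhere).\<close>

definition ops :: "nat \<Rightarrow> ('d list \<Rightarrow> 'd) set" where
  "ops k = {f. \<forall>xs. length xs \<noteq> k \<longrightarrow> f xs = undefined}"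

definition proj :: "nat \<Rightarrow> nat \<Rightarrow> ('d list \<Rightarrow> 'd)" where
  "proj k i = (\<lambda>xs. if length xs = k then xs ! i else undefined)"

definition projs :: "nat \<Rightarrow> ('d list \<Rightarrow> 'd) set" where
  "projs k = proj k ` {..<k}"

definition superpos :: "nat \<Rightarrow> ('d list \<Rightarrow> 'd) \<Rightarrow> ('d list \<Rightarrow> 'd) list \<Rightarrow> ('d list \<Rightarrow> 'd)" where
  "superpos k f gs = (\<lambda>xs. if length xs = k then f (map (\<lambda>g. g xs) gs) else undefined)"

definition weighting :: "nat \<Rightarrow> (('d list \<Rightarrow> 'd) \<Rightarrow> real) \<Rightarrow> bool" where
  "weighting k w \<longleftrightarrow> (\<forall>f. f \<notin> ops k \<longrightarrow> w f = 0) \<and> sum w (ops k) = 0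
     \<and> (\<forall>f \<in> ops k. w f < 0 \<longrightarrow> f \<in> projs k)"

definition supp_w :: "nat \<Rightarrow> (('d list \<Rightarrow> 'd) \<Rightarrow> real) \<Rightarrow> ('d list \<Rightarrow> 'd) set" where
  "supp_w k w = projs k \<union> {f \<in> ops k. w f > 0}"

definition supp :: "(nat \<times> (('d list \<Rightarrow> 'd) \<Rightarrow> real)) set \<Rightarrow> (nat \<times> ('d list \<Rightarrow> 'd)) set" where
  "supp \<Omega> = {(k, f) | k f. 0 < k \<and> f \<in> projs k}
             \<union> {(k, f) | k w f. (k, w) \<in> \<Omega> \<and> f \<in> supp_w k w}"

definition wsuperpos :: "nat \<Rightarrow> (('d list \<Rightarrow> 'd) \<Rightarrow> real) \<Rightarrow> ('d list \<Rightarrow> 'd) list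
    \<Rightarrow> (('d list \<Rightarrow> 'd) \<Rightarrow> real)" where
  "wsuperpos k w gs = (\<lambda>f'. \<Sum>f \<in> ops (length gs). if superpos k f gs = f' then w f else 0)"

definition weighted_clone :: "(nat \<times> (('d::finite list \<Rightarrow> 'd) \<Rightarrow> real)) set \<Rightarrow> bool" where
  "weighted_clone \<Omega> \<longleftrightarrow>
     \<Omega> \<noteq> {}
   \<and> (\<forall>(k, w) \<in> \<Omega>. 0 < k \<and> weighting k w)
   \<and> (\<forall>k w c. (k, w) \<in> \<Omega> \<and> c \<ge> 0 \<longrightarrow> (k, (\<lambda>f. c * w f)) \<in> \<Omega>)
   \<and> (\<forall>k w1 w2. (k, w1) \<in> \<Omega> \<and> (k, w2) \<in> \<Omega> \<longrightarrow> (k, (\<lambda>f. w1 f + w2 f)) \<in> \<Omega>)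
   \<and> (\<forall>l w k gs. (l, w) \<in> \<Omega> \<and> 0 < k \<and> length gs = l
        \<and> (\<forall>g \<in> set gs. g \<in> ops k \<and> (k, g) \<in> supp \<Omega>)
        \<and> weighting k (wsuperpos k w gs)
        \<longrightarrow> (k, wsuperpos k w gs) \<in> \<Omega>)
   \<and> (\<forall>k. closed {w. (k, w) \<in> \<Omega>})"

end

theory Submission
  imports Defs
begin

text \<open>Give the arguments of the various \<open>\<omega>\<^sub>i\<close> disjoint blocks of variables of one large arity \<open>L\<close>:
lifting each \<open>\<omega>\<^sub>i\<close> to arity \<open>L\<close> by superposing it with projections onto its block keeps it in the
clone (superposition with projections is always proper), and the non-negative combination
\<open>\<Sum> c\<^sub>i \<omega>\<^sub>i'\<close> of the lifted weightings is in the clone as well. Superposing this single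
weighting with the list \<open>G\<close> of all \<open>g\<^sub>i\<^sub>,\<^sub>j\<close>, each placed at its block position, gives back
\<open>\<mu>\<close>, because weighting superposition is linear and associative. Since \<open>\<mu>\<close> is proper by
assumption, this last superposition is allowed.\<close>

lemma finite_ops: "finite (ops k :: ('d::finite list \<Rightarrow> 'd) set)"
proof -
  have "ops k = PiE {xs::'d list. length xs = k} (\<lambda>_. UNIV)"
    unfolding ops_def PiE_def extensional_def Pi_def by auto
  moreover have "finite {xs::'d list. length xs = k}"
    using finite_lists_length_eq[of "UNIV::'d set" k] by simp
  ultimately show ?thesis by (simp add: finite_PiE)
qed

lemma superpos_in_ops: "superpos k f gs \<in> ops k"
  by (simp add: superpos_def ops_def)

lemma proj_in_ops: "proj k i \<in> ops k"
  by (simp add: proj_def ops_def)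

lemma superpos_superpos:
  "length G = L \<Longrightarrow> superpos k (superpos L f ps) G = superpos k f (map (\<lambda>p. superpos k p G) ps)"
  unfolding superpos_def by (simp add: fun_eq_iff comp_def)

lemma superpos_proj_left:
  assumes "length G = L" "t < L" "G ! t \<in> ops k"
  shows "superpos k (proj L t) G = G ! t"
  using assms unfolding superpos_def proj_def ops_def by (auto simp: fun_eq_iff)

lemma superpos_proj_right:
  assumes "\<forall>j<l. \<sigma> j < L" "i < l"
  shows "superpos L (proj l i) (map (\<lambda>j. proj L (\<sigma> j)) [0..<l]) = proj L (\<sigma> i)"
  using assms unfolding superpos_def proj_def by (auto simp: fun_eq_iff)

lemma wsuperpos_wsuperpos:
  fixes w :: "('d::finite list \<Rightarrow> 'd) \<Rightarrow> real"
  assumes "length G = L"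
  shows "wsuperpos k (wsuperpos L w ps) G = wsuperpos k w (map (\<lambda>p. superpos k p G) ps)"
proof
  fix f'
  let ?s = "\<lambda>f h. if superpos L f ps = h then (if superpos k h G = f' then w f else 0) else 0"
  have "wsuperpos k (wsuperpos L w ps) G f' = (\<Sum>h\<in>ops L. \<Sum>f\<in>ops (length ps). ?s f h)"
    unfolding wsuperpos_def assms
    by (intro sum.cong refl) (auto simp: if_distrib[of "\<lambda>x. if _ then x else 0"] intro!: sum.cong)
  also have "\<dots> = (\<Sum>f\<in>ops (length ps). \<Sum>h\<in>ops L. ?s f h)"
    by (rule sum.swap)
  also have "\<dots> = (\<Sum>f\<in>ops (length ps). if superpos k (superpos L f ps) G = f' then w f else 0)"
    by (intro sum.cong refl) (simp add: finite_ops superpos_in_ops)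
  also have "\<dots> = wsuperpos k w (map (\<lambda>p. superpos k p G) ps) f'"
    unfolding wsuperpos_def using superpos_superpos[OF assms] by simp
  finally show "wsuperpos k (wsuperpos L w ps) G f' = wsuperpos k w (map (\<lambda>p. superpos k p G) ps) f'" .
qed

lemma wsuperpos_sum:
  "wsuperpos k (\<lambda>f. \<Sum>i\<in>I. c i * w i f) G = (\<lambda>f'. \<Sum>i\<in>I. c i * wsuperpos k (w i) G f')"
proof
  fix f'
  have "wsuperpos k (\<lambda>f. \<Sum>i\<in>I. c i * w i f) G f' =
      (\<Sum>f\<in>ops (length G). \<Sum>i\<in>I. c i * (if superpos k f G = f' then w i f else 0))"
    unfolding wsuperpos_def by (intro sum.cong refl) auto
  also have "\<dots> = (\<Sum>i\<in>I. c i * wsuperpos k (w i) G f')"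
    unfolding wsuperpos_def by (subst sum.swap) (simp add: sum_distrib_left)
  finally show "wsuperpos k (\<lambda>f. \<Sum>i\<in>I. c i * w i f) G f' = (\<Sum>i\<in>I. c i * wsuperpos k (w i) G f')" .
qed

lemma wsuperpos_zero: "wsuperpos k (\<lambda>_. 0) gs = (\<lambda>_. 0)"
  by (simp add: wsuperpos_def)

lemma wsuperpos_projs_wsuperpos:
  fixes w :: "('d::finite list \<Rightarrow> 'd) \<Rightarrow> real"
  assumes "length G = L" "\<forall>j<l. \<sigma> j < L" "\<forall>h\<in>set G. h \<in> ops k"
  shows "wsuperpos k (wsuperpos L w (map (\<lambda>j. proj L (\<sigma> j)) [0..<l])) G
       = wsuperpos k w (map (\<lambda>j. G ! \<sigma> j) [0..<l])"
proof -
  have "map (\<lambda>p. superpos k p G) (map (\<lambda>j. proj L (\<sigma> j)) [0..<l]) = map (\<lambda>j. G ! \<sigma> j) [0..<l]"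
    using assms by (auto intro!: superpos_proj_left)
  then show ?thesis by (simp only: wsuperpos_wsuperpos[OF assms(1)])
qed

lemma weighting_zero: "weighting k (\<lambda>_. 0)"
  by (simp add: weighting_def)

lemma weighting_wsuperpos_projs:
  fixes w :: "('d::finite list \<Rightarrow> 'd) \<Rightarrow> real"
  assumes W: "weighting l w" and \<sigma>: "\<forall>j<l. \<sigma> j < L"
  shows "weighting L (wsuperpos L w (map (\<lambda>j. proj L (\<sigma> j)) [0..<l]))"
proof -
  let ?ps = "map (\<lambda>j. proj L (\<sigma> j)) [0..<l]"
  let ?w' = "wsuperpos L w ?ps"
  have outside: "\<forall>f. f \<notin> ops L \<longrightarrow> ?w' f = 0"
    unfolding wsuperpos_def by (auto intro!: sum.neutral simp: superpos_in_ops)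
  have "sum ?w' (ops L) = (\<Sum>f\<in>ops l. \<Sum>h\<in>ops L. if superpos L f ?ps = h then w f else 0)"
    unfolding wsuperpos_def by (simp add: sum.swap[of _ "ops L"])
  also have "\<dots> = sum w (ops l)"
    by (intro sum.cong refl) (simp add: finite_ops superpos_in_ops)
  finally have total: "sum ?w' (ops L) = 0"
    using W unfolding weighting_def by simp
  have negative: "f' \<in> projs L" if "?w' f' < 0" for f'
  proof -
    have "\<exists>f\<in>ops l. (if superpos L f ?ps = f' then w f else 0) < 0"
    proof (rule ccontr)
      assume "\<not> ?thesis"
      then have "0 \<le> ?w' f'"
        unfolding wsuperpos_def by (intro sum_nonneg) (simp add: not_less)
      with that show False by simp
    qed
    then obtain f where f: "f \<in> ops l" "superpos L f ?ps = f'" "w f < 0"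
      by (auto split: if_splits)
    then obtain i where "i < l" "f = proj l i"
      using W unfolding weighting_def projs_def by auto
    with f(2) \<sigma> have "f' = proj L (\<sigma> i)" "\<sigma> i < L"
      using superpos_proj_right by auto
    then show ?thesis unfolding projs_def by auto
  qed
  show ?thesis unfolding weighting_def using outside total negative by blast
qed

lemma proj_in_supp: "0 < K \<Longrightarrow> t < K \<Longrightarrow> (K, proj K t) \<in> supp \<Omega>"
  unfolding supp_def projs_def by auto

lemma weighted_clone_weighting:
  assumes "weighted_clone \<Omega>" "(k, w) \<in> \<Omega>"
  shows "weighting k w"
  using assms unfolding weighted_clone_def by auto

lemma weighted_clone_scale:
  assumes "weighted_clone \<Omega>" "(k, w) \<in> \<Omega>" "0 \<le> c"
  shows "(k, (\<lambda>f. c * w f)) \<in> \<Omega>"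
  using assms unfolding weighted_clone_def by simp

lemma weighted_clone_add:
  assumes "weighted_clone \<Omega>" "(k, w1) \<in> \<Omega>" "(k, w2) \<in> \<Omega>"
  shows "(k, (\<lambda>f. w1 f + w2 f)) \<in> \<Omega>"
  using assms unfolding weighted_clone_def by simp

lemma weighted_clone_wsuperpos:
  assumes "weighted_clone \<Omega>" "(l, w) \<in> \<Omega>" "0 < k" "length gs = l"
    and "\<forall>g\<in>set gs. g \<in> ops k \<and> (k, g) \<in> supp \<Omega>"
    and "weighting k (wsuperpos k w gs)"
  shows "(k, wsuperpos k w gs) \<in> \<Omega>"
  using assms unfolding weighted_clone_def by simp

lemma weighted_clone_zero:
  assumes \<Omega>: "weighted_clone \<Omega>" and "0 < k"
  shows "(k, (\<lambda>_. 0)) \<in> \<Omega>"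
proof -
  obtain l w where "(l, w) \<in> \<Omega>"
    using \<Omega> unfolding weighted_clone_def by auto
  then have "(l, (\<lambda>_. 0)) \<in> \<Omega>"
    using weighted_clone_scale[OF \<Omega>, of l w 0] by simp
  from weighted_clone_wsuperpos[OF \<Omega> this \<open>0 < k\<close>, of "replicate l (proj k 0)"]
  show ?thesis
    using \<open>0 < k\<close> by (simp add: wsuperpos_zero weighting_zero proj_in_ops proj_in_supp)
qed

lemma weighted_clone_nonneg_sum:
  assumes \<Omega>: "weighted_clone \<Omega>" and "0 < k" "finite I"
    and "\<forall>i\<in>I. (k, w i) \<in> \<Omega> \<and> 0 \<le> c i"
  shows "(k, (\<lambda>f. \<Sum>i\<in>I. c i * w i f)) \<in> \<Omega>"
  using assms(3,4)
proof (induction I rule: finite_induct)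
  case empty
  then show ?case using weighted_clone_zero[OF \<Omega> \<open>0 < k\<close>] by simp
next
  case (insert i I)
  then have "(k, (\<lambda>f. c i * w i f + (\<Sum>i\<in>I. c i * w i f))) \<in> \<Omega>"
    by (intro weighted_clone_add[OF \<Omega>] weighted_clone_scale[OF \<Omega>]) auto
  with insert show ?case by simp
qed

lemma weighted_clone_wsuperpos_projs:
  assumes \<Omega>: "weighted_clone \<Omega>" and "(l, w) \<in> \<Omega>" "0 < L" "\<forall>j<l. \<sigma> j < L"
  shows "(L, wsuperpos L w (map (\<lambda>j. proj L (\<sigma> j)) [0..<l])) \<in> \<Omega>"
  using assms
  by (intro weighted_clone_wsuperpos weighting_wsuperpos_projs weighted_clone_weighting)
     (auto simp: proj_in_ops proj_in_supp)

text \<open>Block \<open>i\<close> occupies positions \<open>i * M ..< i * M + ar i\<close>; unused positions are padded with \<open>d\<close>.\<close>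

lemma block_layout:
  fixes g :: "nat \<Rightarrow> nat \<Rightarrow> 'a" and ar :: "nat \<Rightarrow> nat"
  obtains L :: nat and \<sigma> :: "nat \<Rightarrow> nat \<Rightarrow> nat" and G :: "'a list"
  where "0 < L" "length G = L" "set G \<subseteq> insert d {g i j | i j. i < n \<and> j < ar i}"
    and "\<forall>i<n. \<forall>j<ar i. \<sigma> i j < L \<and> G ! \<sigma> i j = g i j"
proof
  define M where "M = Suc (\<Sum>i<n. ar i)"
  define G where "G = map (\<lambda>t. if t div M < n \<and> t mod M < ar (t div M)
                               then g (t div M) (t mod M) else d) [0..<Suc n * M]"
  have ar_less: "ar i < M" if "i < n" for i
    unfolding M_def using that member_le_sum[of i "{..<n}" ar] by simp
  have block_less: "i * M + j < Suc n * M" if "i < n" "j < M" for i j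
  proof -
    have "i * M + j < Suc i * M" using that by simp
    also have "\<dots> \<le> Suc n * M" using that by (intro mult_right_mono) auto
    finally show ?thesis .
  qed
  show "0 < Suc n * M" "length G = Suc n * M" by (simp_all add: M_def G_def)
  show "set G \<subseteq> insert d {g i j | i j. i < n \<and> j < ar i}"
    unfolding G_def by auto
  show "\<forall>i<n. \<forall>j<ar i. i * M + j < Suc n * M \<and> G ! (i * M + j) = g i j"
  proof (intro allI impI)
    fix i j assume "i < n" "j < ar i"
    then have "j < M" using ar_less by (meson less_trans)
    then show "i * M + j < Suc n * M \<and> G ! (i * M + j) = g i j"
      using \<open>i < n\<close> \<open>j < ar i\<close> block_less by (simp add: G_def)
  qed
qed

theorem lemma3:
  fixes \<Omega> :: "(nat \<times> (('d::finite list \<Rightarrow> 'd) \<Rightarrow> real)) set"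
    and n k :: nat
    and ar :: "nat \<Rightarrow> nat"
    and \<omega> :: "nat \<Rightarrow> (('d list \<Rightarrow> 'd) \<Rightarrow> real)"
    and c :: "nat \<Rightarrow> real"
    and g :: "nat \<Rightarrow> nat \<Rightarrow> ('d list \<Rightarrow> 'd)"
  assumes "CARD('d) \<ge> 2"
    and "weighted_clone \<Omega>"
    and "0 < k"
    and "\<forall>i<n. (ar i, \<omega> i) \<in> \<Omega>"
    and "\<forall>i<n. c i \<ge> 0"
    and "\<forall>i<n. \<forall>j<ar i. g i j \<in> ops k \<and> (k, g i j) \<in> supp \<Omega>"
    and "weighting k (\<lambda>f. \<Sum>i<n. c i * wsuperpos k (\<omega> i) (map (g i) [0..<ar i]) f)"
  shows "(k, (\<lambda>f. \<Sum>i<n. c i * wsuperpos k (\<omega> i) (map (g i) [0..<ar i]) f)) \<in> \<Omega>"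
proof -
  obtain L \<sigma> G where L: "0 < L" "length G = L"
    and G: "set G \<subseteq> insert (proj k 0) {g i j | i j. i < n \<and> j < ar i}"
    and \<sigma>: "\<forall>i<n. \<forall>j<ar i. \<sigma> i j < L \<and> G ! \<sigma> i j = g i j"
    by (rule block_layout)
  have G_admissible: "\<forall>h\<in>set G. h \<in> ops k \<and> (k, h) \<in> supp \<Omega>"
    using G assms(3,6) by (auto simp: proj_in_ops proj_in_supp)
  define \<omega>' where "\<omega>' i = wsuperpos L (\<omega> i) (map (\<lambda>j. proj L (\<sigma> i j)) [0..<ar i])" for i
  have "(L, \<omega>' i) \<in> \<Omega>" if "i < n" for i
    unfolding \<omega>'_def using weighted_clone_wsuperpos_projs assms(2,4) that L(1) \<sigma> by blast
  then have combination: "(L, (\<lambda>f. \<Sum>i<n. c i * \<omega>' i f)) \<in> \<Omega>"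
    using weighted_clone_nonneg_sum[OF assms(2) L(1), of "{..<n}"] assms(5) by simp
  have "wsuperpos k (\<omega>' i) G = wsuperpos k (\<omega> i) (map (g i) [0..<ar i])" if "i < n" for i
  proof -
    have "wsuperpos k (\<omega>' i) G = wsuperpos k (\<omega> i) (map (\<lambda>j. G ! \<sigma> i j) [0..<ar i])"
      unfolding \<omega>'_def using L(2) \<sigma> that G_admissible by (intro wsuperpos_projs_wsuperpos) auto
    also have "map (\<lambda>j. G ! \<sigma> i j) [0..<ar i] = map (g i) [0..<ar i]"
      using \<sigma> that by simp
    finally show ?thesis .
  qed
  then have \<mu>: "wsuperpos k (\<lambda>f. \<Sum>i<n. c i * \<omega>' i f) G
      = (\<lambda>f. \<Sum>i<n. c i * wsuperpos k (\<omega> i) (map (g i) [0..<ar i]) f)"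
    unfolding wsuperpos_sum by (intro ext sum.cong) auto
  show ?thesis
    using weighted_clone_wsuperpos[OF assms(2) combination assms(3) L(2) G_admissible] assms(7)
    unfolding \<mu> .
qed

end
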